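(* Let $B$ be the open unit disk and $U=(u,v)\in C^1(\overline B;\mathbb R^2)$ be harmonic in $B$ with $\det DU>0$ on $\partial B$. Then $\det DU>0$ everywhere in $B$ if and only if there exists $\alpha\in[0,2\pi]$ such that $\nabla u_\alpha\neq0$ everywhere in $B$, where $u_\alpha=\cos(\alpha)u+\sin(\alpha)v$. *)

theory Defs
  imports "HOL-Analysis.Analysis"
begin

text \<open>Planar points are pairs \<open>(x,y) :: real \<times> real\<close> (Euclidean norm), so
  \<open>ball 0 1\<close> is the open unit disk B and \<open>cball 0 1\<close> its closure.\<close>

text \<open>Partial derivatives of a scalar function, taken within a set S
  (for an open S and interior points this is the usual partial derivative).\<close>
definition pdx :: "(real \<times> real) set \<Rightarrow> (real \<times> real \<Rightarrow> real) \<Rightarrow> real \<times> real \<Rightarrow> real" where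
  "pdx S f x = frechet_derivative f (at x within S) (1, 0)"

definition pdy :: "(real \<times> real) set \<Rightarrow> (real \<times> real \<Rightarrow> real) \<Rightarrow> real \<times> real \<Rightarrow> real" where
  "pdy S f x = frechet_derivative f (at x within S) (0, 1)"

definition C1_closure :: "(real \<times> real) set \<Rightarrow> (real \<times> real \<Rightarrow> real) \<Rightarrow> bool" where
  "C1_closure S f \<longleftrightarrow>
     (\<forall>x\<in>closure S. f differentiable (at x within closure S)) \<and>
     continuous_on (closure S) (pdx (closure S) f) \<and>
     continuous_on (closure S) (pdy (closure S) f)"

definition harmonic_on :: "(real \<times> real) set \<Rightarrow> (real \<times> real \<Rightarrow> real) \<Rightarrow> bool" where
  "harmonic_on S f \<longleftrightarrow>
     (\<forall>x\<in>S. f differentiable (at x)) \<and>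
     (\<forall>x\<in>S. pdx UNIV f differentiable (at x) \<and> pdy UNIV f differentiable (at x)) \<and>
     continuous_on S (pdx UNIV (pdx UNIV f)) \<and> continuous_on S (pdy UNIV (pdx UNIV f)) \<and>
     continuous_on S (pdx UNIV (pdy UNIV f)) \<and> continuous_on S (pdy UNIV (pdy UNIV f)) \<and>
     (\<forall>x\<in>S. pdx UNIV (pdx UNIV f) x + pdy UNIV (pdy UNIV f) x = 0)"

definition jac_det :: "(real \<times> real) set \<Rightarrow> (real \<times> real \<Rightarrow> real) \<Rightarrow> (real \<times> real \<Rightarrow> real) \<Rightarrow> real \<times> real \<Rightarrow> real" where
  "jac_det S u v x = pdx S u x * pdy S v x - pdy S u x * pdx S v x"

definition grad :: "(real \<times> real) set \<Rightarrow> (real \<times> real \<Rightarrow> real) \<Rightarrow> real \<times> real \<Rightarrow> real \<times> real" where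
  "grad S f x = (pdx S f x, pdy S f x)"

end

theory Submission
  imports Defs "HOL-Complex_Analysis.Complex_Analysis"
begin

text \<open>Put \<open>f = u\<^sub>x - i u\<^sub>y\<close>, \<open>g = v\<^sub>x - i v\<^sub>y\<close>, \<open>F = cos \<alpha> f + sin \<alpha> g\<close> and
  \<open>G = - sin \<alpha> f + cos \<alpha> g\<close>. Harmonicity makes f and g holomorphic (the Cauchy-Riemann
  equations are the Laplace equation together with the symmetry of second derivatives), and
  \<open>\<nabla>u\<^sub>\<alpha> \<noteq> 0\<close> says exactly that F has no zeros. Since the rotation (f, g) \<mapsto> (F, G)
  preserves \<open>Im (g cnj f) = - det DU\<close>, the real part of the holomorphic function \<open>-i G / F\<close>
  is \<open>- det DU / |F|\<^sup>2\<close>. It is negative on every circle close enough to the boundary,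
  because \<open>det DU > 0\<close> on the boundary, so by the maximum principle it is negative in all of B.
  The other direction is trivial with \<open>\<alpha> = 0\<close>.\<close>

lemma has_real_derivative_along_line:
  fixes w :: "'a::real_normed_vector \<Rightarrow> real"
  assumes "w differentiable at (a + s *\<^sub>R h)"
  shows "((\<lambda>t. w (a + t *\<^sub>R h)) has_real_derivative frechet_derivative w (at (a + s *\<^sub>R h)) h) (at s)"
proof -
  let ?D = "frechet_derivative w (at (a + s *\<^sub>R h))"
  have w: "(w has_derivative ?D) (at (a + s *\<^sub>R h))"
    using assms frechet_derivative_works by blast
  have "((\<lambda>s. a + s *\<^sub>R h) has_derivative (\<lambda>t. t *\<^sub>R h)) (at s)"
    by (auto intro!: derivative_eq_intros)
  from has_derivative_compose[OF this w]
  have "((\<lambda>s. w (a + s *\<^sub>R h)) has_derivative (\<lambda>t. t * ?D h)) (at s)"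
    by (simp add: linear_scale[OF has_derivative_linear[OF w]])
  then show ?thesis
    by (simp add: has_field_derivative_def mult_commute_abs)
qed

lemma second_difference_mean_value:
  fixes w :: "'a::real_normed_vector \<Rightarrow> real"
  assumes "t > 0"
    and diff: "\<And>s. s \<in> {0..t} \<Longrightarrow>
      w differentiable at (p + s *\<^sub>R h) \<and> w differentiable at (p + s *\<^sub>R h + t *\<^sub>R k)"
  obtains \<xi> where "0 < \<xi>" "\<xi> < t"
    "w (p + t *\<^sub>R h + t *\<^sub>R k) - w (p + t *\<^sub>R h) - w (p + t *\<^sub>R k) + w p
       = t * (frechet_derivative w (at (p + \<xi> *\<^sub>R h + t *\<^sub>R k)) h
              - frechet_derivative w (at (p + \<xi> *\<^sub>R h)) h)"
proof -
  define g where "g s = w (p + s *\<^sub>R h + t *\<^sub>R k) - w (p + s *\<^sub>R h)" for s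
  have shift: "p + s *\<^sub>R h + t *\<^sub>R k = (p + t *\<^sub>R k) + s *\<^sub>R h" for s
    by (simp add: algebra_simps)
  have g': "(g has_real_derivative frechet_derivative w (at (p + s *\<^sub>R h + t *\<^sub>R k)) h
                                  - frechet_derivative w (at (p + s *\<^sub>R h)) h) (at s)"
    if "s \<in> {0..t}" for s
    using has_real_derivative_along_line[of w "p + t *\<^sub>R k" s h]
      has_real_derivative_along_line[of w p s h] diff[OF that]
    unfolding g_def shift by (auto intro!: derivative_eq_intros)
  have "continuous_on {0..t} g"
    using g' by (intro continuous_at_imp_continuous_on) (blast intro: DERIV_continuous)
  moreover have "g differentiable at s" if "0 < s" "s < t" for s
    using g'[of s] that real_differentiable_def by fastforce
  ultimately obtain l \<xi> where \<xi>: "0 < \<xi>" "\<xi> < t" "(g has_real_derivative l) (at \<xi>)"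
      "g t - g 0 = (t - 0) * l"
    using MVT[of 0 t g] \<open>t > 0\<close> by blast
  moreover have "l = frechet_derivative w (at (p + \<xi> *\<^sub>R h + t *\<^sub>R k)) h
                       - frechet_derivative w (at (p + \<xi> *\<^sub>R h)) h"
    using DERIV_unique[OF \<xi>(3) g'] \<xi> by simp
  ultimately show ?thesis
    using that by (simp add: g_def)
qed

lemma norm_scaleR_add_le:
  fixes h k :: "'a::real_normed_vector"
  assumes "0 \<le> s" "s \<le> t" "0 \<le> r" "r \<le> t"
  shows "norm (s *\<^sub>R h + r *\<^sub>R k) \<le> t * (norm h + norm k)"
proof -
  have "norm (s *\<^sub>R h + r *\<^sub>R k) \<le> s * norm h + r * norm k"
    using norm_triangle_ineq[of "s *\<^sub>R h" "r *\<^sub>R k"] assms by simp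
  also have "\<dots> \<le> t * (norm h + norm k)"
    using assms by (simp add: distrib_left add_mono mult_right_mono)
  finally show ?thesis .
qed

lemma second_difference_approx:
  fixes w :: "'a::real_normed_vector \<Rightarrow> real"
  assumes "t > 0" and "linear L"
    and diff: "\<And>s. s \<in> {0..t} \<Longrightarrow>
      w differentiable at (p + s *\<^sub>R h) \<and> w differentiable at (p + s *\<^sub>R h + t *\<^sub>R k)"
    and remainder: "\<And>y. norm y \<le> t * (norm h + norm k) \<Longrightarrow>
      \<bar>frechet_derivative w (at (p + y)) h - frechet_derivative w (at p) h - L y\<bar> \<le> \<epsilon> * t"
  shows "\<bar>(w (p + t *\<^sub>R h + t *\<^sub>R k) - w (p + t *\<^sub>R h) - w (p + t *\<^sub>R k) + w p) / t\<^sup>2 - L k\<bar>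
           \<le> 2 * \<epsilon>"
proof -
  define D where "D = (\<lambda>q. frechet_derivative w (at q) h)"
  obtain \<xi> where \<xi>: "0 < \<xi>" "\<xi> < t"
    "w (p + t *\<^sub>R h + t *\<^sub>R k) - w (p + t *\<^sub>R h) - w (p + t *\<^sub>R k) + w p
       = t * (D (p + \<xi> *\<^sub>R h + t *\<^sub>R k) - D (p + \<xi> *\<^sub>R h))"
    using second_difference_mean_value[OF \<open>t > 0\<close> diff] unfolding D_def by blast
  have "\<bar>D (p + \<xi> *\<^sub>R h + t *\<^sub>R k) - D p - L (\<xi> *\<^sub>R h + t *\<^sub>R k)\<bar> \<le> \<epsilon> * t"
    using remainder[OF norm_scaleR_add_le[of \<xi> t t]] \<xi> unfolding D_def by (simp add: add.assoc)
  moreover have "\<bar>D (p + \<xi> *\<^sub>R h) - D p - L (\<xi> *\<^sub>R h)\<bar> \<le> \<epsilon> * t"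
    using remainder[OF norm_scaleR_add_le[of \<xi> t 0]] \<xi> unfolding D_def by simp
  moreover have "L (\<xi> *\<^sub>R h + t *\<^sub>R k) - L (\<xi> *\<^sub>R h) = t * L k"
    using \<open>linear L\<close> by (simp add: linear_add linear_scale)
  ultimately have "\<bar>D (p + \<xi> *\<^sub>R h + t *\<^sub>R k) - D (p + \<xi> *\<^sub>R h) - t * L k\<bar> \<le> 2 * \<epsilon> * t"
    by linarith
  moreover have "t * X / t\<^sup>2 - L k = (X - t * L k) / t" for X
    using \<open>t > 0\<close> by (simp add: power2_eq_square field_simps)
  ultimately show ?thesis
    unfolding \<xi>(3) using \<open>t > 0\<close> by (simp add: pos_divide_le_eq)
qed

lemma has_derivative_remainder_le:
  fixes D :: "'a::real_normed_vector \<Rightarrow> real"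
  assumes "(D has_derivative L) (at p)" "e > 0" "c > 0"
  obtains d where "d > 0" "\<And>y t. norm y \<le> c * t \<Longrightarrow> t < d \<Longrightarrow> \<bar>D (p + y) - D p - L y\<bar> \<le> e * t"
proof -
  from assms have "e / c > 0" by simp
  then obtain d where d: "d > 0"
      "\<forall>y. norm (y - p) < d \<longrightarrow> norm (D y - D p - L (y - p)) \<le> e / c * norm (y - p)"
    using assms(1) unfolding has_derivative_at_alt by blast
  show ?thesis
  proof (rule that[of "d / c"])
    show "d / c > 0"
      using d(1) assms(3) by simp
    fix y :: 'a and t :: real
    assume y: "norm y \<le> c * t" and t: "t < d / c"
    then have "norm y < d"
      using assms(3) by (simp add: field_simps)
    then have "\<bar>D (p + y) - D p - L y\<bar> \<le> e / c * norm y"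
      using d(2)[rule_format, of "p + y"] by simp
    also have "\<dots> \<le> e / c * (c * t)"
      using y assms by (intro mult_left_mono) auto
    finally show "\<bar>D (p + y) - D p - L y\<bar> \<le> e * t"
      using assms(3) by simp
  qed
qed

lemma second_difference_tendsto:
  fixes w :: "'a::real_normed_vector \<Rightarrow> real"
  assumes "open S" "p \<in> S" and diff: "\<And>q. q \<in> S \<Longrightarrow> w differentiable at q"
    and diffD: "(\<lambda>q. frechet_derivative w (at q) h) differentiable at p"
  shows "((\<lambda>t. (w (p + t *\<^sub>R h + t *\<^sub>R k) - w (p + t *\<^sub>R h) - w (p + t *\<^sub>R k) + w p) / t\<^sup>2)
           \<longlongrightarrow> frechet_derivative (\<lambda>q. frechet_derivative w (at q) h) (at p) k) (at_right 0)"
proof -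
  define D where "D = (\<lambda>q. frechet_derivative w (at q) h)"
  define L where "L = frechet_derivative D (at p)"
  have DL: "(D has_derivative L) (at p)"
    using diffD frechet_derivative_works unfolding D_def L_def by blast
  obtain d1 where d1: "d1 > 0" "ball p d1 \<subseteq> S"
    using assms(1,2) open_contains_ball by blast
  have inS: "p + y \<in> S" if "norm y < d1" for y
    using d1(2) that by (auto simp: subset_iff dist_norm)
  define c where "c = norm h + norm k + 1"
  have c: "c > 0" "\<And>t. t \<ge> 0 \<Longrightarrow> t * (norm h + norm k) \<le> c * t"
    by (auto simp: c_def add_pos_nonneg algebra_simps)
  show ?thesis
    unfolding D_def[symmetric] L_def[symmetric]
  proof (rule tendstoI)
    fix e :: real assume "e > 0"
    then obtain d2 where d2: "d2 > 0"
      "\<And>y t. norm y \<le> c * t \<Longrightarrow> t < d2 \<Longrightarrow> \<bar>D (p + y) - D p - L y\<bar> \<le> e / 4 * t"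
      using has_derivative_remainder_le[OF DL _ c(1), of "e / 4"] by auto
    show "\<forall>\<^sub>F t in at_right 0. dist ((w (p + t *\<^sub>R h + t *\<^sub>R k) - w (p + t *\<^sub>R h)
        - w (p + t *\<^sub>R k) + w p) / t\<^sup>2) (L k) < e"
      unfolding eventually_at_right_field
    proof (intro exI[of _ "min (d1 / c) d2"] conjI allI impI)
      show "min (d1 / c) d2 > 0" using c d1 d2 by simp
      fix t :: real assume t: "0 < t" "t < min (d1 / c) d2"
      have "p + s *\<^sub>R h + r *\<^sub>R k \<in> S" if "0 \<le> s" "s \<le> t" "0 \<le> r" "r \<le> t" for s r
      proof -
        have "norm (s *\<^sub>R h + r *\<^sub>R k) < d1"
          using norm_scaleR_add_le[OF that, of h k] c(2)[of t] t c(1) by (simp add: field_simps)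
        then show ?thesis
          using inS by (simp add: add.assoc)
      qed
      then have "w differentiable at (p + s *\<^sub>R h) \<and> w differentiable at (p + s *\<^sub>R h + t *\<^sub>R k)"
        if "s \<in> {0..t}" for s
        using that t by (metis atLeastAtMost_iff diff order_refl scale_zero_left add_0_right less_le)
      moreover have "\<bar>D (p + y) - D p - L y\<bar> \<le> e / 4 * t" if "norm y \<le> t * (norm h + norm k)" for y :: 'a
        using d2(2)[OF order_trans[OF that c(2)]] t by simp
      ultimately have "\<bar>(w (p + t *\<^sub>R h + t *\<^sub>R k) - w (p + t *\<^sub>R h) - w (p + t *\<^sub>R k) + w p) / t\<^sup>2
          - L k\<bar> \<le> 2 * (e / 4)"
        using second_difference_approx[OF t(1) has_derivative_linear[OF DL]] unfolding D_def by blast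
      then show "dist ((w (p + t *\<^sub>R h + t *\<^sub>R k) - w (p + t *\<^sub>R h) - w (p + t *\<^sub>R k) + w p) / t\<^sup>2)
          (L k) < e"
        using \<open>e > 0\<close> by (simp add: dist_real_def)
    qed
  qed
qed

theorem frechet_derivative_second_symmetric:
  fixes w :: "'a::real_normed_vector \<Rightarrow> real"
  assumes "open S" "p \<in> S" "\<And>q. q \<in> S \<Longrightarrow> w differentiable at q"
    and "(\<lambda>q. frechet_derivative w (at q) h) differentiable at p"
    and "(\<lambda>q. frechet_derivative w (at q) k) differentiable at p"
  shows "frechet_derivative (\<lambda>q. frechet_derivative w (at q) h) (at p) k
       = frechet_derivative (\<lambda>q. frechet_derivative w (at q) k) (at p) h"
proof (rule tendsto_unique[OF trivial_limit_at_right_real])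
  show "((\<lambda>t. (w (p + t *\<^sub>R h + t *\<^sub>R k) - w (p + t *\<^sub>R h) - w (p + t *\<^sub>R k) + w p) / t\<^sup>2)
      \<longlongrightarrow> frechet_derivative (\<lambda>q. frechet_derivative w (at q) h) (at p) k) (at_right 0)"
    using assms by (intro second_difference_tendsto)
  have "((\<lambda>t. (w (p + t *\<^sub>R k + t *\<^sub>R h) - w (p + t *\<^sub>R k) - w (p + t *\<^sub>R h) + w p) / t\<^sup>2)
      \<longlongrightarrow> frechet_derivative (\<lambda>q. frechet_derivative w (at q) k) (at p) h) (at_right 0)"
    using assms by (intro second_difference_tendsto)
  then show "((\<lambda>t. (w (p + t *\<^sub>R h + t *\<^sub>R k) - w (p + t *\<^sub>R h) - w (p + t *\<^sub>R k) + w p) / t\<^sup>2)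
      \<longlongrightarrow> frechet_derivative (\<lambda>q. frechet_derivative w (at q) k) (at p) h) (at_right 0)"
    by (simp add: algebra_simps)
qed

corollary pdy_pdx_eq_pdx_pdy:
  assumes "open S" "p \<in> S" "\<And>q. q \<in> S \<Longrightarrow> w differentiable at q"
    and "pdx UNIV w differentiable at p" "pdy UNIV w differentiable at p"
  shows "pdy UNIV (pdx UNIV w) p = pdx UNIV (pdy UNIV w) p"
  using frechet_derivative_second_symmetric[of S p w "(1, 0)" "(0, 1)"] assms
  unfolding pdx_def pdy_def by simp

lemma frechet_derivative_eq_pdx_pdy:
  fixes w :: "real \<times> real \<Rightarrow> real"
  assumes "w differentiable at q"
  shows "frechet_derivative w (at q) h = fst h * pdx UNIV w q + snd h * pdy UNIV w q"
proof -
  obtain h1 h2 where h: "h = (h1, h2)"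
    by fastforce
  have "linear (frechet_derivative w (at q))"
    using assms frechet_derivative_works has_derivative_linear by blast
  then have "frechet_derivative w (at q) (h1 *\<^sub>R (1, 0) + h2 *\<^sub>R (0, 1))
      = h1 *\<^sub>R frechet_derivative w (at q) (1, 0) + h2 *\<^sub>R frechet_derivative w (at q) (0, 1)"
    by (simp only: linear_add linear_scale)
  then show ?thesis
    by (simp add: h pdx_def pdy_def)
qed

lemma pdx_pdy_lincomb:
  fixes u v :: "real \<times> real \<Rightarrow> real"
  assumes "u differentiable at x" "v differentiable at x"
  shows "pdx UNIV (\<lambda>y. a * u y + b * v y) x = a * pdx UNIV u x + b * pdx UNIV v x"
    and "pdy UNIV (\<lambda>y. a * u y + b * v y) x = a * pdy UNIV u x + b * pdy UNIV v x"
proof -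
  have "((\<lambda>y. a * u y + b * v y) has_derivative
      (\<lambda>h. a * frechet_derivative u (at x) h + b * frechet_derivative v (at x) h)) (at x)"
    using assms by (intro has_derivative_add has_derivative_mult_right)
      (auto simp: frechet_derivative_works)
  then have "frechet_derivative (\<lambda>y. a * u y + b * v y) (at x)
      = (\<lambda>h. a * frechet_derivative u (at x) h + b * frechet_derivative v (at x) h)"
    by (rule frechet_derivative_at[symmetric])
  then show "pdx UNIV (\<lambda>y. a * u y + b * v y) x = a * pdx UNIV u x + b * pdx UNIV v x"
    and "pdy UNIV (\<lambda>y. a * u y + b * v y) x = a * pdy UNIV u x + b * pdy UNIV v x"
    by (simp_all add: pdx_def pdy_def)
qed

lemma jac_det_interior:
  assumes "x \<in> interior S"
  shows "jac_det S u v x = jac_det UNIV u v x"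
  using at_within_interior[OF assms] by (simp add: jac_det_def pdx_def pdy_def)

lemma continuous_on_jac_det:
  assumes "C1_closure S u" "C1_closure S v"
  shows "continuous_on (closure S) (jac_det (closure S) u v)"
  using assms unfolding C1_closure_def jac_det_def[abs_def]
  by (intro continuous_intros) auto

text \<open>\<open>dz w = 2 \<partial>w/\<partial>z\<close>, the Wirtinger derivative of a real function w.\<close>

definition dz :: "(real \<times> real \<Rightarrow> real) \<Rightarrow> complex \<Rightarrow> complex" where
  "dz w z = Complex (pdx UNIV w (Re z, Im z)) (- pdy UNIV w (Re z, Im z))"

lemma dz_eq_0_iff: "dz w z = 0 \<longleftrightarrow> grad UNIV w (Re z, Im z) = (0, 0)"
  by (simp add: dz_def grad_def complex_eq_iff)

lemma dz_lincomb:
  assumes "u differentiable at (Re z, Im z)" "v differentiable at (Re z, Im z)"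
  shows "dz (\<lambda>y. a * u y + b * v y) z = of_real a * dz u z + of_real b * dz v z"
  using pdx_pdy_lincomb[OF assms] by (simp add: dz_def complex_eq_iff)

lemma Im_dz_mult_cnj: "Im (dz v z * cnj (dz u z)) = - jac_det UNIV u v (Re z, Im z)"
  by (simp add: dz_def jac_det_def)

lemma has_field_derivative_dz:
  fixes w :: "real \<times> real \<Rightarrow> real" and z :: complex
  defines "p \<equiv> (Re z, Im z)"
  assumes dP: "pdx UNIV w differentiable at p" and dQ: "pdy UNIV w differentiable at p"
    and laplace: "pdx UNIV (pdx UNIV w) p + pdy UNIV (pdy UNIV w) p = 0"
    and symm: "pdy UNIV (pdx UNIV w) p = pdx UNIV (pdy UNIV w) p"
  shows "(dz w has_field_derivative dz (pdx UNIV w) z) (at z)"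
proof -
  define P where "P = pdx UNIV w"
  define Q where "Q = pdy UNIV w"
  have Re_Im: "((\<lambda>z. (Re z, Im z)) has_derivative (\<lambda>h. (Re h, Im h))) (at z)"
    by (auto intro!: derivative_eq_intros)
  have "((\<lambda>z. P (Re z, Im z)) has_derivative (\<lambda>h. frechet_derivative P (at p) (Re h, Im h))) (at z)"
    using has_derivative_compose[OF Re_Im] dP frechet_derivative_works unfolding P_def p_def
    by (metis (no_types, lifting) ext)
  moreover have "((\<lambda>z. Q (Re z, Im z)) has_derivative (\<lambda>h. frechet_derivative Q (at p) (Re h, Im h))) (at z)"
    using has_derivative_compose[OF Re_Im] dQ frechet_derivative_works unfolding Q_def p_def
    by (metis (no_types, lifting) ext)
  ultimately have "(dz w has_derivative (\<lambda>h. of_real (frechet_derivative P (at p) (Re h, Im h))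
      + \<i> * of_real (- frechet_derivative Q (at p) (Re h, Im h)))) (at z)"
    unfolding dz_def P_def[symmetric] Q_def[symmetric] Complex_eq
    by (intro derivative_eq_intros) auto
  moreover have "of_real (frechet_derivative P (at p) (Re h, Im h))
      + \<i> * of_real (- frechet_derivative Q (at p) (Re h, Im h)) = dz P z * h" for h
    using symm laplace[unfolded add_eq_0_iff2] unfolding P_def[symmetric] Q_def[symmetric]
    by (simp add: frechet_derivative_eq_pdx_pdy[OF dP[folded P_def]]
        frechet_derivative_eq_pdx_pdy[OF dQ[folded Q_def]] dz_def p_def[symmetric] complex_eq_iff algebra_simps)
  ultimately show ?thesis
    unfolding has_field_derivative_def P_def by (simp add: mult_commute_abs)
qed

lemma norm_Re_Im [simp]: "norm (Re z, Im z) = cmod z"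
  by (simp add: norm_Pair cmod_def)

lemma holomorphic_on_dz:
  assumes "open S" "harmonic_on S w"
  shows "dz w holomorphic_on {z. (Re z, Im z) \<in> S}"
proof -
  have "(dz w has_field_derivative dz (pdx UNIV w) z) (at z)" if z: "(Re z, Im z) \<in> S" for z
  proof (rule has_field_derivative_dz)
    show "pdx UNIV w differentiable at (Re z, Im z)" "pdy UNIV w differentiable at (Re z, Im z)"
      and "pdx UNIV (pdx UNIV w) (Re z, Im z) + pdy UNIV (pdy UNIV w) (Re z, Im z) = 0"
      using assms(2) z by (auto simp: harmonic_on_def)
    show "pdy UNIV (pdx UNIV w) (Re z, Im z) = pdx UNIV (pdy UNIV w) (Re z, Im z)"
      using assms z by (intro pdy_pdx_eq_pdx_pdy[of S]) (auto simp: harmonic_on_def)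
  qed
  then show ?thesis
    unfolding holomorphic_on_def field_differentiable_def
    by (blast intro: has_field_derivative_at_within)
qed

lemma Im_rotate_mult_cnj:
  fixes f g :: complex
  assumes "c\<^sup>2 + s\<^sup>2 = 1"
  shows "Im ((- of_real s * f + of_real c * g) * cnj (of_real c * f + of_real s * g)) = Im (g * cnj f)"
proof -
  have "Im ((- of_real s * f + of_real c * g) * cnj (of_real c * f + of_real s * g))
      = (c\<^sup>2 + s\<^sup>2) * Im (g * cnj f)"
    by (simp add: algebra_simps power2_eq_square)
  then show ?thesis
    using assms by simp
qed

lemma Re_neg_i_divide_less_0_iff:
  fixes f g :: complex
  assumes "f \<noteq> 0"
  shows "Re (- \<i> * (g / f)) < 0 \<longleftrightarrow> Im (g * cnj f) < 0"
  using assms by (simp add: complex_div_cnj[of g f] zero_less_divide_iff)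

lemma Re_rotated_dz_quotient_less_0_iff:
  assumes "c\<^sup>2 + s\<^sup>2 = 1" "of_real c * dz u z + of_real s * dz v z \<noteq> 0"
  shows "Re (- \<i> * ((- of_real s * dz u z + of_real c * dz v z) / (of_real c * dz u z + of_real s * dz v z))) < 0
     \<longleftrightarrow> jac_det UNIV u v (Re z, Im z) > 0"
proof -
  have "Re (- \<i> * ((- of_real s * dz u z + of_real c * dz v z) / (of_real c * dz u z + of_real s * dz v z))) < 0
      \<longleftrightarrow> Im ((- of_real s * dz u z + of_real c * dz v z) * cnj (of_real c * dz u z + of_real s * dz v z)) < 0"
    by (rule Re_neg_i_divide_less_0_iff[OF assms(2)])
  also have "Im ((- of_real s * dz u z + of_real c * dz v z) * cnj (of_real c * dz u z + of_real s * dz v z))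
      = Im (dz v z * cnj (dz u z))"
    by (rule Im_rotate_mult_cnj[OF assms(1)])
  also have "\<dots> = - jac_det UNIV u v (Re z, Im z)"
    by (rule Im_dz_mult_cnj)
  finally show ?thesis
    by simp
qed

lemma continuous_pos_near_sphere:
  fixes J :: "'a::euclidean_space \<Rightarrow> real"
  assumes "continuous_on (cball 0 1) J" "\<And>z. z \<in> sphere 0 1 \<Longrightarrow> J z > 0"
  obtains r where "r < 1" "\<And>z. z \<in> cball 0 1 \<Longrightarrow> r < norm z \<Longrightarrow> J z > 0"
proof -
  \<comment> \<open>0 is added only to make K nonempty; it does not lie on the sphere either.\<close>
  define K where "K = insert 0 {z \<in> cball 0 1. J z \<le> 0}"
  have "closed {z \<in> cball 0 1. J z \<le> 0}"
    by (rule continuous_on_closed_Collect_le[OF assms(1) continuous_on_const closed_cball])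
  moreover have "bounded {z \<in> cball 0 1. J z \<le> 0}"
    by (rule bounded_subset[OF bounded_cball[of 0 1]]) auto
  ultimately have "compact K"
    unfolding K_def by (simp add: compact_eq_bounded_closed)
  moreover have "K \<noteq> {}"
    by (simp add: K_def)
  ultimately obtain z1 where z1: "z1 \<in> K" "\<forall>z\<in>K. norm z \<le> norm z1"
    using continuous_attains_sup[OF _ _ continuous_on_norm_id] by blast
  show ?thesis
  proof
    show "norm z1 < 1"
      using z1(1) assms(2)[of z1] by (fastforce simp: K_def)
    show "J z > 0" if "z \<in> cball 0 1" "norm z1 < norm z" for z
      using that z1(2) by (force simp: K_def)
  qed
qed

lemma pos_on_ball_by_maximum_principle:
  fixes J :: "complex \<Rightarrow> real"
  assumes "continuous_on (cball 0 1) J" "\<And>z. z \<in> sphere 0 1 \<Longrightarrow> J z > 0"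
    and "\<psi> holomorphic_on ball 0 1" "\<And>z. z \<in> ball 0 1 \<Longrightarrow> Re (\<psi> z) < 0 \<longleftrightarrow> J z > 0"
    and "z \<in> ball 0 1"
  shows "J z > 0"
proof -
  obtain r where r: "r < 1" "\<And>z. z \<in> cball 0 1 \<Longrightarrow> r < norm z \<Longrightarrow> J z > 0"
    using continuous_pos_near_sphere assms(1,2) by blast
  show ?thesis
  proof (cases "r < norm z")
    case True
    then show ?thesis
      using r(2) assms(5) by simp
  next
    case False
    define \<rho> where "\<rho> = (max r 0 + 1) / 2"
    have \<rho>: "r < \<rho>" "0 < \<rho>" "\<rho> < 1"
      using r(1) by (auto simp: \<rho>_def)
    have "cball 0 \<rho> \<subseteq> ball (0::complex) 1"
      using \<rho> by auto
    then have cont: "continuous_on (cball 0 \<rho>) \<psi>"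
      using holomorphic_on_imp_continuous_on[OF assms(3)] continuous_on_subset by blast
    have "continuous_on (sphere 0 \<rho>) (\<lambda>y. Re (\<psi> y))"
      using cont by (intro continuous_intros) (auto intro: continuous_on_subset)
    moreover have "sphere (0::complex) \<rho> \<noteq> {}"
      using \<rho> by simp
    ultimately obtain z1 where z1: "z1 \<in> sphere 0 \<rho>" "\<And>y. y \<in> sphere 0 \<rho> \<Longrightarrow> Re (\<psi> y) \<le> Re (\<psi> z1)"
      using continuous_attains_sup[OF compact_sphere] by blast
    have "Re (\<psi> z1) < 0"
      using assms(4)[of z1] r(2)[of z1] z1(1) \<rho> by auto
    moreover have "Re (\<psi> z) \<le> Re (\<psi> z1)"
    proof (rule maximum_real_frontier[of \<psi> "cball 0 \<rho>"])
      show "\<psi> holomorphic_on interior (cball 0 \<rho>)"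
        by (rule holomorphic_on_subset[OF assms(3)]) (use \<rho> in auto)
    qed (use cont z1(2) False \<rho> in auto)
    ultimately have "Re (\<psi> z) < 0"
      by linarith
    then show ?thesis
      using assms(4,5) by blast
  qed
qed

lemma jac_det_pos_if_rotated_gradient_nonzero:
  fixes u v :: "real \<times> real \<Rightarrow> real"
  defines "J \<equiv> jac_det (cball 0 1) u v"
  assumes "continuous_on (cball 0 1) J"
    and "harmonic_on (ball 0 1) u" "harmonic_on (ball 0 1) v"
    and "\<forall>x\<in>sphere 0 1. J x > 0"
    and "\<forall>x\<in>ball 0 1. grad UNIV (\<lambda>y. cos \<alpha> * u y + sin \<alpha> * v y) x \<noteq> (0, 0)"
  shows "\<forall>x\<in>ball 0 1. J x > 0"
proof -
  have ball: "{z. (Re z, Im z) \<in> ball 0 1} = ball 0 1"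
    by auto
  define F where "F z = of_real (cos \<alpha>) * dz u z + of_real (sin \<alpha>) * dz v z" for z
  define G where "G z = - of_real (sin \<alpha>) * dz u z + of_real (cos \<alpha>) * dz v z" for z
  have holo: "dz u holomorphic_on ball 0 1" "dz v holomorphic_on ball 0 1"
    using holomorphic_on_dz[OF open_ball assms(3)] holomorphic_on_dz[OF open_ball assms(4)]
    unfolding ball by blast+
  have F_nz: "F z \<noteq> 0" if "z \<in> ball 0 1" for z
  proof -
    have "F z = dz (\<lambda>y. cos \<alpha> * u y + sin \<alpha> * v y) z"
      using that assms(3,4) unfolding F_def harmonic_on_def by (simp add: dz_lincomb)
    then show ?thesis
      using that assms(6) by (simp add: dz_eq_0_iff)
  qed
  have pos: "J (Re z, Im z) > 0" if "z \<in> ball 0 1" for z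
  proof (rule pos_on_ball_by_maximum_principle[where \<psi> = "\<lambda>z. - \<i> * (G z / F z)"])
    show "continuous_on (cball 0 1) (\<lambda>z. J (Re z, Im z))"
      by (intro continuous_on_compose2[OF assms(2)] continuous_intros) auto
    show "(\<lambda>z. - \<i> * (G z / F z)) holomorphic_on ball 0 1"
      unfolding F_def G_def using holo F_nz[unfolded F_def] by (intro holomorphic_intros) auto
    show "Re (- \<i> * (G y / F y)) < 0 \<longleftrightarrow> J (Re y, Im y) > 0" if "y \<in> ball 0 1" for y
      using Re_rotated_dz_quotient_less_0_iff[OF sin_cos_squared_add2 F_nz[OF that, unfolded F_def]]
        that jac_det_interior[of "(Re y, Im y)" "cball 0 1"]
      unfolding F_def G_def J_def by simp
  qed (use assms(5) that in auto)
  show ?thesis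
  proof
    fix x :: "real \<times> real"
    assume "x \<in> ball 0 1"
    then show "J x > 0"
      using pos[of "Complex (fst x) (snd x)"] norm_Re_Im[of "Complex (fst x) (snd x)"] by simp
  qed
qed

theorem corollary3p3:
  fixes u v :: "real \<times> real \<Rightarrow> real"
  assumes "C1_closure (ball 0 1) u" and "C1_closure (ball 0 1) v"
    and "harmonic_on (ball 0 1) u" and "harmonic_on (ball 0 1) v"
    and "\<forall>x\<in>sphere 0 1. jac_det (cball 0 1) u v x > 0"
  shows "(\<forall>x\<in>ball 0 1. jac_det (cball 0 1) u v x > 0) \<longleftrightarrow>
         (\<exists>\<alpha>\<in>{0..2*pi}. \<forall>x\<in>ball 0 1.
             grad UNIV (\<lambda>y. cos \<alpha> * u y + sin \<alpha> * v y) x \<noteq> (0, 0))"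
proof
  assume "\<forall>x\<in>ball 0 1. jac_det (cball 0 1) u v x > 0"
  then have "\<forall>x\<in>ball 0 1. grad UNIV u x \<noteq> (0, 0)"
    using jac_det_interior[of _ "cball 0 1" u v] by (force simp: jac_det_def grad_def)
  then show "\<exists>\<alpha>\<in>{0..2*pi}. \<forall>x\<in>ball 0 1. grad UNIV (\<lambda>y. cos \<alpha> * u y + sin \<alpha> * v y) x \<noteq> (0, 0)"
    by (intro bexI[of _ 0]) auto
next
  assume "\<exists>\<alpha>\<in>{0..2*pi}. \<forall>x\<in>ball 0 1. grad UNIV (\<lambda>y. cos \<alpha> * u y + sin \<alpha> * v y) x \<noteq> (0, 0)"
  moreover have "continuous_on (cball 0 1) (jac_det (cball 0 1) u v)"
    using continuous_on_jac_det[OF assms(1,2)] by simp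
  ultimately show "\<forall>x\<in>ball 0 1. jac_det (cball 0 1) u v x > 0"
    using jac_det_pos_if_rotated_gradient_nonzero assms(3-5) by blast
qed

end
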